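(* Let $X$ be a Tychonoff regular locally Menger $p$-space and let $Y=bX\setminus X$ be a remainder of $X$ in some compactification $bX$. Then there is a compact subspace $K$ of $Y$ such that every closed subset $F$ of $Y$ with $F\cap K=\emptyset$ is a Lindelöf $p$-space (and hence every such $F$ is an $s$-space).
   Context: A space $X$ is Menger if for each sequence $(\mathcal{U}_n)$ of open covers of $X$ there is a sequence $(\mathcal{V}_n)$ with each $\mathcal{V}_n$ a finite subset of $\mathcal{U}_n$ and $\bigcup_{n}\bigcup\mathcal{V}_n=X$. A space $X$ is locally Menger if for each $x\in X$ there exist an open set $U$ and a Menger subspace $Y$ of $X$ with $x\in U\subseteq Y$. A Tychonoff space $X$ is a $p$-space if in some (equivalently, any) compactification $bX$ there is a countable family $\{\mathcal{U}_n:n\in\mathbb{N}\}$, each $\mathcal{U}_n$ a collection of open subsets of $bX$, such that for each $x\in X$, $x\in\bigcap_{n}\bigcup\{U\in\mathcal{U}_n:x\in U\}\subseteq X$. For a family $\mathcal{C}$ of subsets of $Z$, $\mathcal{C}_\delta$ is the family of intersections of nonempty subfamilies of $\mathcal{C}$ and $\mathcal{C}_{\delta,\sigma}$ the family of unions of subfamilies of $\mathcal{C}_\delta$; $\mathcal{C}$ is a source for $Y\subseteq Z$ if $Y\in\mathcal{C}_{\delta,\sigma}$. A Tychonoff space $X$ is an $s$-space if there is a countable source for $X$ in some (equivalently, any) compactification $bX$ consisting of open subsets of $bX$. *)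

theory Defs
  imports "HOL-Analysis.Analysis"
begin

definition Menger_space :: "'a topology \<Rightarrow> bool" where
  "Menger_space T \<longleftrightarrow>
     (\<forall>\<U> :: nat \<Rightarrow> 'a set set.
        (\<forall>n. (\<forall>U\<in>\<U> n. openin T U) \<and> topspace T \<subseteq> \<Union>(\<U> n)) \<longrightarrow>
        (\<exists>\<V> :: nat \<Rightarrow> 'a set set.
           (\<forall>n. finite (\<V> n) \<and> \<V> n \<subseteq> \<U> n) \<and>
           topspace T \<subseteq> (\<Union>n. \<Union>(\<V> n))))"

definition locally_Menger_space :: "'a topology \<Rightarrow> bool" where
  "locally_Menger_space T \<longleftrightarrow>
     (\<forall>x\<in>topspace T. \<exists>U Y. openin T U \<and> Y \<subseteq> topspace T \<and>
         Menger_space (subtopology T Y) \<and> x \<in> U \<and> U \<subseteq> Y)"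

definition Tychonoff_space :: "'a topology \<Rightarrow> bool" where
  "Tychonoff_space T \<longleftrightarrow> completely_regular_space T \<and> Hausdorff_space T"

definition compactification_of :: "'a topology \<Rightarrow> 'a set \<Rightarrow> bool" where
  "compactification_of bX S \<longleftrightarrow> compact_space bX \<and> Hausdorff_space bX \<and>
     S \<subseteq> topspace bX \<and> bX closure_of S = topspace bX"

definition p_space_wrt :: "'a topology \<Rightarrow> 'a set \<Rightarrow> bool" where
  "p_space_wrt bX S \<longleftrightarrow>
     (\<exists>\<U> :: nat \<Rightarrow> 'a set set. (\<forall>n. \<forall>U\<in>\<U> n. openin bX U) \<and>
        (\<forall>x\<in>S. x \<in> (\<Inter>n. \<Union>{U\<in>\<U> n. x \<in> U}) \<and> (\<Inter>n. \<Union>{U\<in>\<U> n. x \<in> U}) \<subseteq> S))"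

text \<open>S is a p-space (a Tychonoff space with the p-space property, tested in a compactification).
  For a subset S of a compact Hausdorff space B, the closure of S in B is a compactification of S.\<close>
definition p_space_in :: "'a topology \<Rightarrow> 'a set \<Rightarrow> bool" where
  "p_space_in B S \<longleftrightarrow> S \<subseteq> topspace B \<and> Tychonoff_space (subtopology B S) \<and>
     p_space_wrt (subtopology B (B closure_of S)) S"

definition delta_family :: "'a set set \<Rightarrow> 'a set set" where
  "delta_family \<C> = {\<Inter>\<D> | \<D>. \<D> \<subseteq> \<C> \<and> \<D> \<noteq> {}}"

definition delta_sigma_family :: "'a set set \<Rightarrow> 'a set set" where
  "delta_sigma_family \<C> = {\<Union>\<E> | \<E>. \<E> \<subseteq> delta_family \<C>}"

definition source_for :: "'a set set \<Rightarrow> 'a set \<Rightarrow> bool" where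
  "source_for \<C> Y \<longleftrightarrow> Y \<in> delta_sigma_family \<C>"

definition s_space_wrt :: "'a topology \<Rightarrow> 'a set \<Rightarrow> bool" where
  "s_space_wrt bX S \<longleftrightarrow>
     (\<exists>\<C>. countable \<C> \<and> (\<forall>C\<in>\<C>. openin bX C) \<and> source_for \<C> S)"

definition s_space_in :: "'a topology \<Rightarrow> 'a set \<Rightarrow> bool" where
  "s_space_in B S \<longleftrightarrow> S \<subseteq> topspace B \<and> Tychonoff_space (subtopology B S) \<and>
     s_space_wrt (subtopology B (B closure_of S)) S"

end

theory Submission
  imports Defs
begin

(*
  Call S countably separated from R if countably many pairs A, B of open sets with cl A inside B
  separate every x in S from every y in R, in the sense that x is in A and y is not in B.

  In a compactification bX of the p-space X, every Lindelof subset of X is countably separated from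
  the remainder: shrink the members of the p-space covers by regularity and keep countably many of
  them by the Lindelof property. As X is locally Menger, hence locally Lindelof, the open sets V of bX
  for which V \<inter> X is countably separated from the remainder cover X; let W be their union and
  K = bX - W. A closed subset F of the remainder missing K has its compact closure inside W, so by
  compactness cl F - F, which lies in X, is countably separated from F. Such a countable separating
  family yields at once a p-space sequence and a countable source for F in cl F, and together with
  compactness of cl F it makes F Lindelof.
*)

section \<open>Countable separation by pairs of open sets\<close>

definition separating_pairs :: "'a topology \<Rightarrow> ('a set \<times> 'a set) set \<Rightarrow> 'a set \<Rightarrow> 'a set \<Rightarrow> bool" where
  "separating_pairs T P S R \<longleftrightarrow>
     (\<forall>A B. (A, B) \<in> P \<longrightarrow> openin T A \<and> openin T B \<and> T closure_of A \<subseteq> B) \<and>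
     (\<forall>x\<in>S. \<forall>y\<in>R. \<exists>A B. (A, B) \<in> P \<and> x \<in> A \<and> y \<notin> B)"

definition countably_separated :: "'a topology \<Rightarrow> 'a set \<Rightarrow> 'a set \<Rightarrow> bool" where
  "countably_separated T S R \<longleftrightarrow> (\<exists>P. countable P \<and> separating_pairs T P S R)"

lemma countably_separated_mono:
  assumes "countably_separated T S R" and "S' \<subseteq> S" and "R' \<subseteq> R"
  shows "countably_separated T S' R'"
proof -
  obtain P where "countable P" and P: "separating_pairs T P S R"
    using assms(1) unfolding countably_separated_def by blast
  have "separating_pairs T P S' R'"
    using P assms(2,3) unfolding separating_pairs_def by (simp add: subset_iff)
  then show ?thesis
    using \<open>countable P\<close> unfolding countably_separated_def by blast
qed

lemma countably_separated_Union:
  assumes "countable \<S>" and "\<And>S. S \<in> \<S> \<Longrightarrow> countably_separated T S R"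
  shows "countably_separated T (\<Union>\<S>) R"
proof -
  have "\<forall>S\<in>\<S>. \<exists>P. countable P \<and> separating_pairs T P S R"
    using assms(2) unfolding countably_separated_def by blast
  from bchoice[OF this] obtain P
    where P: "\<forall>S\<in>\<S>. countable (P S) \<and> separating_pairs T (P S) S R"
    by blast
  define Q where "Q = (\<Union>S\<in>\<S>. P S)"
  have "openin T A \<and> openin T B \<and> T closure_of A \<subseteq> B" if AB: "(A, B) \<in> Q" for A B
  proof -
    obtain S where "S \<in> \<S>" "(A, B) \<in> P S" using AB unfolding Q_def by blast
    then show ?thesis using P unfolding separating_pairs_def by blast
  qed
  moreover have "\<exists>A B. (A, B) \<in> Q \<and> x \<in> A \<and> y \<notin> B"
    if x: "x \<in> \<Union>\<S>" and y: "y \<in> R" for x y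
  proof -
    obtain S where "S \<in> \<S>" "x \<in> S" using x by blast
    then obtain A B where "(A, B) \<in> P S" "x \<in> A" "y \<notin> B"
      using P y unfolding separating_pairs_def by blast
    then show ?thesis using \<open>S \<in> \<S>\<close> unfolding Q_def by blast
  qed
  ultimately have "separating_pairs T Q (\<Union>\<S>) R"
    unfolding separating_pairs_def by blast
  moreover have "countable Q"
    using P assms(1) unfolding Q_def by blast
  ultimately show ?thesis
    unfolding countably_separated_def by blast
qed

lemma countably_separated_subtopology:
  assumes "countably_separated T S R"
  shows "countably_separated (subtopology T C) (C \<inter> S) (C \<inter> R)"
proof -
  obtain P where "countable P" and P: "separating_pairs T P S R"
    using assms unfolding countably_separated_def by blast
  define Q where "Q = (\<lambda>(A, B). (C \<inter> A, C \<inter> B)) ` P"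
  have "openin (subtopology T C) A' \<and> openin (subtopology T C) B' \<and>
      subtopology T C closure_of A' \<subseteq> B'" if "(A', B') \<in> Q" for A' B'
  proof -
    obtain A B where AB: "(A, B) \<in> P" and "A' = C \<inter> A" "B' = C \<inter> B"
      using \<open>(A', B') \<in> Q\<close> unfolding Q_def by auto
    moreover have "openin T A" "openin T B" "T closure_of A \<subseteq> B"
      using P AB unfolding separating_pairs_def by auto
    moreover have "subtopology T C closure_of (C \<inter> A) \<subseteq> C \<inter> T closure_of A"
      using closure_of_subtopology_subset[of T C "C \<inter> A"] closure_of_mono[of "C \<inter> A" A T]
        closure_of_subset_topspace[of "subtopology T C"] by auto
    ultimately show ?thesis
      by (auto simp: openin_subtopology_Int2)
  qed
  moreover have "\<exists>A' B'. (A', B') \<in> Q \<and> x \<in> A' \<and> y \<notin> B'"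
    if xy: "x \<in> C \<inter> S" "y \<in> C \<inter> R" for x y
  proof -
    obtain A B where "(A, B) \<in> P" "x \<in> A" "y \<notin> B"
      using P xy unfolding separating_pairs_def by blast
    then show ?thesis
      unfolding Q_def using xy by force
  qed
  ultimately have "separating_pairs (subtopology T C) Q (C \<inter> S) (C \<inter> R)"
    unfolding separating_pairs_def by blast
  moreover have "countable Q"
    unfolding Q_def using \<open>countable P\<close> by blast
  ultimately show ?thesis
    unfolding countably_separated_def by blast
qed

lemma countably_separated_sequence:
  assumes "countably_separated T S R"
  obtains A B :: "nat \<Rightarrow> 'a set"
  where "\<And>n. openin T (A n)" "\<And>n. openin T (B n)" "\<And>n. T closure_of (A n) \<subseteq> B n"
    and "\<And>x y. x \<in> S \<Longrightarrow> y \<in> R \<Longrightarrow> \<exists>n. x \<in> A n \<and> y \<notin> B n"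
proof -
  obtain P where "countable P" and P: "separating_pairs T P S R"
    using assms unfolding countably_separated_def by blast
  (* The dummy pair makes the family nonempty, so that it can be enumerated. *)
  define e where "e = from_nat_into (insert ({}, topspace T) P)"
  have range_e: "range e = insert ({}, topspace T) P"
    unfolding e_def using \<open>countable P\<close> by simp
  show thesis
  proof (rule that[of "\<lambda>n. fst (e n)" "\<lambda>n. snd (e n)"])
    fix n
    obtain A B where e_n: "e n = (A, B)"
      by fastforce
    then have "(A, B) = ({}, topspace T) \<or> (A, B) \<in> P"
      using range_e by (metis insertE rangeI)
    then show "openin T (fst (e n))" "openin T (snd (e n))" "T closure_of (fst (e n)) \<subseteq> snd (e n)"
      using P e_n unfolding separating_pairs_def by (auto simp: closure_of_subset_topspace)
  next
    fix x y assume "x \<in> S" "y \<in> R"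
    then obtain A B where "(A, B) \<in> P" "x \<in> A" "y \<notin> B"
      using P unfolding separating_pairs_def by blast
    moreover have "(A, B) \<in> range e"
      using \<open>(A, B) \<in> P\<close> range_e by blast
    ultimately show "\<exists>n. x \<in> fst (e n) \<and> y \<notin> snd (e n)"
      by (metis fst_conv rangeE snd_conv)
  qed
qed

section \<open>Subspaces countably separated from their complement\<close>

lemma countably_separated_imp_p_space_wrt:
  assumes "F \<subseteq> topspace T" and "countably_separated T (topspace T - F) F"
  shows "p_space_wrt T F"
proof -
  obtain A B :: "nat \<Rightarrow> 'a set"
    where A: "\<And>n. openin T (A n)" and B: "\<And>n. openin T (B n)"
      and AB: "\<And>n. T closure_of (A n) \<subseteq> B n"
      and sep: "\<And>x y. x \<in> topspace T - F \<Longrightarrow> y \<in> F \<Longrightarrow> \<exists>n. x \<in> A n \<and> y \<notin> B n"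
    by (rule countably_separated_sequence[OF assms(2)]) (rule that)
  (* The n separating a point z outside F from y keeps z out of the star of y in \<G> n. *)
  define \<G> where "\<G> n = {topspace T - T closure_of (A n), B n}" for n
  have "\<forall>n. \<forall>U\<in>\<G> n. openin T U"
    unfolding \<G>_def using B by auto
  moreover have "y \<in> (\<Inter>n. \<Union>{U\<in>\<G> n. y \<in> U}) \<and> (\<Inter>n. \<Union>{U\<in>\<G> n. y \<in> U}) \<subseteq> F"
    if y: "y \<in> F" for y
  proof
    have "y \<in> topspace T - T closure_of (A n)" if "y \<notin> B n" for n
      using y assms(1) AB[of n] that by blast
    then show "y \<in> (\<Inter>n. \<Union>{U\<in>\<G> n. y \<in> U})"
      unfolding \<G>_def by blast
    show "(\<Inter>n. \<Union>{U\<in>\<G> n. y \<in> U}) \<subseteq> F"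
    proof
      fix z assume z: "z \<in> (\<Inter>n. \<Union>{U\<in>\<G> n. y \<in> U})"
      then have "z \<in> topspace T"
        unfolding \<G>_def using B openin_subset by fastforce
      show "z \<in> F"
      proof (rule ccontr)
        assume "z \<notin> F"
        then obtain n where "z \<in> A n" "y \<notin> B n"
          using sep \<open>z \<in> topspace T\<close> y by blast
        moreover have "A n \<subseteq> T closure_of (A n)"
          using A by (simp add: closure_of_subset openin_subset)
        ultimately show False
          using z unfolding \<G>_def by blast
      qed
    qed
  qed
  ultimately show ?thesis
    unfolding p_space_wrt_def by blast
qed

lemma countably_separated_imp_s_space_wrt:
  assumes "F \<subseteq> topspace T" and "countably_separated T (topspace T - F) F"
  shows "s_space_wrt T F"
proof -
  obtain A B :: "nat \<Rightarrow> 'a set"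
    where A: "\<And>n. openin T (A n)" and "\<And>n. openin T (B n)"
      and AB: "\<And>n. T closure_of (A n) \<subseteq> B n"
      and sep: "\<And>x y. x \<in> topspace T - F \<Longrightarrow> y \<in> F \<Longrightarrow> \<exists>n. x \<in> A n \<and> y \<notin> B n"
    by (rule countably_separated_sequence[OF assms(2)]) (rule that)
  define \<C> where "\<C> = insert (topspace T) (range (\<lambda>n. topspace T - T closure_of (A n)))"
  define \<D> where "\<D> y = insert (topspace T) {topspace T - T closure_of (A n) |n. y \<notin> B n}" for y
  have "\<Inter>(\<D> y) \<in> delta_family \<C>" for y
    unfolding delta_family_def \<C>_def \<D>_def by blast
  moreover have "y \<in> \<Inter>(\<D> y)" if "y \<in> F" for y
    using that assms(1) AB unfolding \<D>_def by blast
  moreover have "\<Inter>(\<D> y) \<subseteq> F" if y: "y \<in> F" for y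
  proof
    fix z assume z: "z \<in> \<Inter>(\<D> y)"
    show "z \<in> F"
    proof (rule ccontr)
      assume "z \<notin> F"
      then obtain n where "z \<in> A n" "y \<notin> B n"
        using sep z y unfolding \<D>_def by blast
      moreover have "A n \<subseteq> T closure_of (A n)"
        using A by (simp add: closure_of_subset openin_subset)
      ultimately show False
        using z unfolding \<D>_def by blast
    qed
  qed
  ultimately have "F \<in> delta_sigma_family \<C>"
    unfolding delta_sigma_family_def
    by (intro CollectI exI[of _ "(\<lambda>y. \<Inter>(\<D> y)) ` F"]) blast
  moreover have "countable \<C>" "\<forall>C\<in>\<C>. openin T C"
    unfolding \<C>_def by auto
  ultimately show ?thesis
    unfolding s_space_wrt_def source_for_def by blast
qed

lemma countable_compact_network_imp_Lindelof_space:
  assumes "F \<subseteq> topspace T" and "countable \<K>" and "\<And>K. K \<in> \<K> \<Longrightarrow> compactin T K"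
    and "\<And>W y. openin T W \<Longrightarrow> F \<subseteq> W \<Longrightarrow> y \<in> F \<Longrightarrow> \<exists>K\<in>\<K>. y \<in> K \<and> K \<subseteq> W"
  shows "Lindelof_space (subtopology T F)"
  unfolding Lindelof_space_subtopology_subset[OF assms(1)]
proof (intro allI impI, elim conjE)
  fix \<U> assume \<U>: "\<forall>U\<in>\<U>. openin T U" and F: "F \<subseteq> \<Union>\<U>"
  define \<K>' where "\<K>' = {K \<in> \<K>. K \<subseteq> \<Union>\<U>}"
  have "\<forall>K\<in>\<K>'. \<exists>\<V>. finite \<V> \<and> \<V> \<subseteq> \<U> \<and> K \<subseteq> \<Union>\<V>"
    using assms(3) \<U> unfolding \<K>'_def by (blast intro: compactinD)
  from bchoice[OF this] obtain f
    where f: "\<forall>K\<in>\<K>'. finite (f K) \<and> f K \<subseteq> \<U> \<and> K \<subseteq> \<Union>(f K)"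
    by blast
  have "countable \<K>'"
    unfolding \<K>'_def using assms(2) by (rule countable_subset[rotated]) blast
  moreover have "countable (f K)" if "K \<in> \<K>'" for K
    using f that by (simp add: countable_finite)
  ultimately have "countable (\<Union>(f ` \<K>'))"
    by (rule countable_UN)
  moreover have "\<Union>(f ` \<K>') \<subseteq> \<U>"
    using f by blast
  moreover have "F \<subseteq> \<Union>(\<Union>(f ` \<K>'))"
  proof
    fix y assume "y \<in> F"
    then obtain K where K: "K \<in> \<K>'" "y \<in> K"
      using assms(4)[of "\<Union>\<U>" y] \<U> F unfolding \<K>'_def by blast
    then have "y \<in> \<Union>(f K)"
      using f by blast
    then show "y \<in> \<Union>(\<Union>(f ` \<K>'))"
      using K(1) by blast
  qed
  ultimately show "\<exists>\<V>. countable \<V> \<and> \<V> \<subseteq> \<U> \<and> F \<subseteq> \<Union>\<V>"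
    by blast
qed

lemma compact_space_finite_cover_outside_open:
  assumes "compact_space T" and "openin T W" and "\<And>i. i \<in> I \<Longrightarrow> openin T (A i)"
    and "topspace T - W \<subseteq> (\<Union>i\<in>I. A i)"
  obtains N where "finite N" "N \<subseteq> I" "topspace T - (\<Union>i\<in>N. A i) \<subseteq> W"
proof -
  have "compactin T (topspace T - W)"
    using assms(1,2) by (simp add: closedin_compact_space closedin_diff)
  then obtain \<A> where "finite \<A>" "\<A> \<subseteq> A ` I" "topspace T - W \<subseteq> \<Union>\<A>"
    using compactinD[of T "topspace T - W" "A ` I"] assms(3,4) by blast
  then obtain N where "finite N" "N \<subseteq> I" "\<A> = A ` N"
    using finite_subset_image[of \<A> A I] by blast
  then show thesis
    using that \<open>topspace T - W \<subseteq> \<Union>\<A>\<close> by blast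
qed

lemma countably_separated_imp_Lindelof_space:
  assumes "compact_space T" and "F \<subseteq> topspace T" and "countably_separated T (topspace T - F) F"
  shows "Lindelof_space (subtopology T F)"
proof -
  obtain A B :: "nat \<Rightarrow> 'a set"
    where A: "\<And>n. openin T (A n)" and "\<And>n. openin T (B n)"
      and AB: "\<And>n. T closure_of (A n) \<subseteq> B n"
      and sep: "\<And>x y. x \<in> topspace T - F \<Longrightarrow> y \<in> F \<Longrightarrow> \<exists>n. x \<in> A n \<and> y \<notin> B n"
    by (rule countably_separated_sequence[OF assms(3)]) (rule that)
  define \<K> where "\<K> = (\<lambda>N. topspace T - (\<Union>n\<in>N. A n)) ` {N. finite N}"
  show ?thesis
  proof (rule countable_compact_network_imp_Lindelof_space[OF assms(2)])
    show "countable \<K>"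
      unfolding \<K>_def by (simp add: countable_Collect_finite)
    have "closedin T (topspace T - (\<Union>n\<in>N. A n))" for N
      using A by (intro closedin_diff closedin_topspace openin_Union) auto
    then show "compactin T K" if "K \<in> \<K>" for K
      using that closedin_compact_space[OF assms(1)] unfolding \<K>_def by blast
  next
    fix W y assume W: "openin T W" "F \<subseteq> W" and y: "y \<in> F"
    have "topspace T - W \<subseteq> (\<Union>n\<in>{n. y \<notin> B n}. A n)"
      using sep y W(2) by blast
    then obtain N where "finite N" "N \<subseteq> {n. y \<notin> B n}" "topspace T - (\<Union>n\<in>N. A n) \<subseteq> W"
      using compact_space_finite_cover_outside_open[OF assms(1) W(1)] A by metis
    moreover have "y \<in> topspace T - (\<Union>n\<in>N. A n)"
      using y assms(2) calculation(2) AB closure_of_subset[OF openin_subset[OF A]] by blast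
    ultimately show "\<exists>K\<in>\<K>. y \<in> K \<and> K \<subseteq> W"
      unfolding \<K>_def by blast
  qed
qed

lemma countably_separated_from_closure_imp_Lindelof_p_s_space:
  assumes "compact_space T" and "Hausdorff_space T" and "F \<subseteq> topspace T"
    and "countably_separated T (T closure_of F - F) F"
  shows "Lindelof_space (subtopology T F) \<and> p_space_in T F \<and> s_space_in T F"
proof -
  define C where "C = T closure_of F"
  have "F \<subseteq> C" "C \<subseteq> topspace T"
    unfolding C_def using assms(3) by (simp_all add: closure_of_subset closure_of_subset_topspace)
  then have top_C: "topspace (subtopology T C) = C"
    by auto
  have sep: "countably_separated (subtopology T C) (topspace (subtopology T C) - F) F"
    using countably_separated_subtopology[OF assms(4), of C] \<open>F \<subseteq> C\<close> top_C
    by (elim countably_separated_mono) (auto simp: C_def)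
  have "compact_space (subtopology T C)"
    unfolding C_def by (intro compact_space_subtopology closedin_compact_space[OF assms(1)]) simp
  then have "Lindelof_space (subtopology (subtopology T C) F)"
    using countably_separated_imp_Lindelof_space sep \<open>F \<subseteq> C\<close> top_C by metis
  moreover have "subtopology (subtopology T C) F = subtopology T F"
    using \<open>F \<subseteq> C\<close> by (simp add: subtopology_subtopology Int_absorb1)
  moreover have "completely_regular_space T"
    using assms(1,2) compact_Hausdorff_or_regular_imp_normal_space normal_imp_completely_regular_space
    by blast
  then have "Tychonoff_space (subtopology T F)"
    unfolding Tychonoff_space_def
    using assms(2) by (simp add: completely_regular_space_subtopology Hausdorff_space_subtopology)
  moreover have "F \<subseteq> topspace (subtopology T C)"
    using \<open>F \<subseteq> C\<close> top_C by simp
  then have "p_space_wrt (subtopology T C) F" and "s_space_wrt (subtopology T C) F"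
    using countably_separated_imp_p_space_wrt countably_separated_imp_s_space_wrt sep by blast+
  ultimately show ?thesis
    unfolding p_space_in_def s_space_in_def C_def[symmetric] using assms(3) by simp
qed

section \<open>Remainders of locally Menger p-spaces\<close>

lemma regular_space_closure_of_neighbourhood:
  assumes "regular_space T" and "openin T W" and "x \<in> W"
  obtains U where "openin T U" "x \<in> U" "T closure_of U \<subseteq> W"
proof -
  have "closedin T (topspace T - W)" and "x \<in> topspace T - (topspace T - W)"
    using assms(2,3) openin_subset by auto
  then obtain U where "openin T U" "x \<in> U" "disjnt (topspace T - W) (T closure_of U)"
    using assms(1) unfolding regular_space by blast
  then show thesis
    using that closure_of_subset_topspace[of T U] unfolding disjnt_def by blast
qed

lemma Lindelof_countable_closure_refinement:
  assumes "regular_space T" and "Lindelof_space (subtopology T M)" and "M \<subseteq> topspace T"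
    and "\<And>U. U \<in> \<U> \<Longrightarrow> openin T U" and "M \<subseteq> \<Union>\<U>"
  obtains \<Q> where "countable \<Q>"
    and "\<Q> \<subseteq> {(D, U). U \<in> \<U> \<and> openin T D \<and> T closure_of D \<subseteq> U}" and "M \<subseteq> \<Union>(fst ` \<Q>)"
proof -
  define \<P> where "\<P> = {(D, U). U \<in> \<U> \<and> openin T D \<and> T closure_of D \<subseteq> U}"
  have "M \<subseteq> \<Union>(fst ` \<P>)"
  proof
    fix x assume "x \<in> M"
    then obtain U where "U \<in> \<U>" "x \<in> U"
      using assms(5) by blast
    moreover obtain D where "openin T D" "x \<in> D" "T closure_of D \<subseteq> U"
      using regular_space_closure_of_neighbourhood[OF assms(1) assms(4)] calculation by blast
    ultimately show "x \<in> \<Union>(fst ` \<P>)"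
      unfolding \<P>_def by force
  qed
  moreover have "\<forall>D\<in>fst ` \<P>. openin T D"
    unfolding \<P>_def by auto
  ultimately obtain \<V> where "countable \<V>" "\<V> \<subseteq> fst ` \<P>" "M \<subseteq> \<Union>\<V>"
    using assms(2)[unfolded Lindelof_space_subtopology_subset[OF assms(3)], rule_format, of "fst ` \<P>"]
    by blast
  moreover obtain \<Q> where "countable \<Q>" "\<Q> \<subseteq> \<P>" "\<V> = fst ` \<Q>"
    using countable_subset_image[of \<V> fst \<P>] calculation(1,2) by blast
  ultimately show thesis
    using that[of \<Q>] unfolding \<P>_def by blast
qed

lemma Lindelof_imp_countably_separated:
  assumes "p_space_wrt T X" and "regular_space T" and "M \<subseteq> X"
    and "Lindelof_space (subtopology T M)"
  shows "countably_separated T M (topspace T - X)"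
proof -
  obtain \<U> :: "nat \<Rightarrow> 'a set set" where \<U>: "\<forall>n. \<forall>U\<in>\<U> n. openin T U"
    and star: "\<forall>x\<in>X. x \<in> (\<Inter>n. \<Union>{U \<in> \<U> n. x \<in> U}) \<and> (\<Inter>n. \<Union>{U \<in> \<U> n. x \<in> U}) \<subseteq> X"
    using assms(1) unfolding p_space_wrt_def by blast
  have cover: "M \<subseteq> \<Union>(\<U> n)" for n
    using star assms(3) by blast
  then have M_top: "M \<subseteq> topspace T"
    using \<U> openin_subset by blast
  have "\<forall>n. \<exists>\<Q>. countable \<Q> \<and> \<Q> \<subseteq> {(D, U). U \<in> \<U> n \<and> openin T D \<and> T closure_of D \<subseteq> U} \<and>
      M \<subseteq> \<Union>(fst ` \<Q>)"
  proof
    fix n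
    show "\<exists>\<Q>. countable \<Q> \<and> \<Q> \<subseteq> {(D, U). U \<in> \<U> n \<and> openin T D \<and> T closure_of D \<subseteq> U} \<and>
      M \<subseteq> \<Union>(fst ` \<Q>)"
      by (rule Lindelof_countable_closure_refinement[OF assms(2,4) M_top _ cover[of n]]) (use \<U> in blast)+
  qed
  then obtain \<Q> where "\<forall>n. countable (\<Q> n) \<and>
      \<Q> n \<subseteq> {(D, U). U \<in> \<U> n \<and> openin T D \<and> T closure_of D \<subseteq> U} \<and> M \<subseteq> \<Union>(fst ` \<Q> n)"
    by (rule choice[THEN exE])
  then have \<Q>: "countable (\<Q> n)"
    "\<Q> n \<subseteq> {(D, U). U \<in> \<U> n \<and> openin T D \<and> T closure_of D \<subseteq> U}"
    "M \<subseteq> \<Union>(fst ` \<Q> n)" for n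
    by simp_all
  have "openin T D \<and> openin T U \<and> T closure_of D \<subseteq> U" if "(D, U) \<in> (\<Union>n. \<Q> n)" for D U
    using that \<Q>(2) \<U> by blast
  moreover have "\<exists>D U. (D, U) \<in> (\<Union>n. \<Q> n) \<and> x \<in> D \<and> y \<notin> U"
    if x: "x \<in> M" and y: "y \<in> topspace T - X" for x y
  proof -
    obtain n where n: "y \<notin> \<Union>{U \<in> \<U> n. x \<in> U}"
      using star assms(3) x y by blast
    obtain p where "p \<in> \<Q> n" "x \<in> fst p"
      using \<Q>(3)[of n] x by blast
    then obtain D U where DU: "(D, U) \<in> \<Q> n" "x \<in> D"
      by (cases p) auto
    moreover have "D \<subseteq> U" "U \<in> \<U> n"
      using DU \<Q>(2)[of n] closure_of_subset[OF openin_subset] by blast+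
    ultimately show ?thesis
      using n by blast
  qed
  ultimately have "separating_pairs T (\<Union>n. \<Q> n) M (topspace T - X)"
    unfolding separating_pairs_def by blast
  moreover have "countable (\<Union>n. \<Q> n)"
    using \<Q>(1) by blast
  ultimately show ?thesis
    unfolding countably_separated_def by blast
qed

lemma Menger_space_imp_Lindelof_space:
  assumes "Menger_space T"
  shows "Lindelof_space T"
  unfolding Lindelof_space_alt
proof (intro allI impI)
  fix \<U> assume \<U>: "(\<forall>U\<in>\<U>. openin T U) \<and> topspace T \<subseteq> \<Union>\<U>"
  obtain \<V> :: "nat \<Rightarrow> 'a set set"
    where \<V>: "\<forall>n. finite (\<V> n) \<and> \<V> n \<subseteq> \<U>" and cover: "topspace T \<subseteq> (\<Union>n. \<Union>(\<V> n))"
    using assms[unfolded Menger_space_def, THEN spec[of _ "\<lambda>_. \<U>"]] \<U> by auto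
  have "countable (\<Union>n. \<V> n)"
    using \<V> by (simp add: countable_finite)
  moreover have "(\<Union>n. \<V> n) \<subseteq> \<U>"
    using \<V> by (simp add: UN_subset_iff)
  moreover have "topspace T \<subseteq> \<Union>(\<Union>n. \<V> n)"
  proof
    fix x assume "x \<in> topspace T"
    then obtain n V where "V \<in> \<V> n" "x \<in> V"
      using cover by blast
    then show "x \<in> \<Union>(\<Union>n. \<V> n)"
      by blast
  qed
  ultimately show "\<exists>\<V>'. countable \<V>' \<and> \<V>' \<subseteq> \<U> \<and> topspace T \<subseteq> \<Union>\<V>'"
    by blast
qed

lemma locally_Menger_space_imp_Lindelof_neighbourhood:
  assumes "locally_Menger_space T" and "x \<in> topspace T"
  obtains U M where "openin T U" "x \<in> U" "U \<subseteq> M" "M \<subseteq> topspace T"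
    "Lindelof_space (subtopology T M)"
  using assms Menger_space_imp_Lindelof_space unfolding locally_Menger_space_def by metis

lemma countably_separated_open_neighbourhood:
  assumes "p_space_wrt T X" and "regular_space T" and "X \<subseteq> topspace T"
    and "locally_Menger_space (subtopology T X)"
  obtains W where "openin T W" "X \<subseteq> W"
    "\<And>C. compactin T C \<Longrightarrow> C \<subseteq> W \<Longrightarrow> countably_separated T (C \<inter> X) (topspace T - X)"
proof -
  define \<V> where "\<V> = {V. openin T V \<and> countably_separated T (V \<inter> X) (topspace T - X)}"
  have "X \<subseteq> \<Union>\<V>"
  proof
    fix x assume "x \<in> X"
    then have "x \<in> topspace (subtopology T X)"
      using assms(3) by auto
    then obtain U M where U: "openin (subtopology T X) U" "x \<in> U" "U \<subseteq> M"
      and "M \<subseteq> topspace (subtopology T X)" and M: "Lindelof_space (subtopology (subtopology T X) M)"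
      by (rule locally_Menger_space_imp_Lindelof_neighbourhood[OF assms(4)])
    then have "M \<subseteq> X"
      by simp
    obtain V where V: "openin T V" "U = V \<inter> X"
      using U(1) unfolding openin_subtopology by blast
    have "subtopology (subtopology T X) M = subtopology T M"
      using \<open>M \<subseteq> X\<close> by (simp add: subtopology_subtopology Int_absorb1)
    then have "countably_separated T M (topspace T - X)"
      using Lindelof_imp_countably_separated[OF assms(1,2) \<open>M \<subseteq> X\<close>] M by simp
    then have "countably_separated T (V \<inter> X) (topspace T - X)"
      using countably_separated_mono V(2) U(3) by blast
    then show "x \<in> \<Union>\<V>"
      using V U(2) unfolding \<V>_def by blast
  qed
  show thesis
  proof (rule that[of "\<Union>\<V>"])
    show "openin T (\<Union>\<V>)"
      unfolding \<V>_def by blast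
    show "X \<subseteq> \<Union>\<V>"
      by fact
  next
    fix C assume "compactin T C" "C \<subseteq> \<Union>\<V>"
    then obtain \<V>' where "finite \<V>'" "\<V>' \<subseteq> \<V>" "C \<subseteq> \<Union>\<V>'"
      using compactinD[of T C \<V>] unfolding \<V>_def by blast
    then have "countably_separated T (\<Union>V\<in>\<V>'. V \<inter> X) (topspace T - X)"
      by (intro countably_separated_Union) (auto simp: \<V>_def countable_finite)
    then show "countably_separated T (C \<inter> X) (topspace T - X)"
      using \<open>C \<subseteq> \<Union>\<V>'\<close> by (elim countably_separated_mono) auto
  qed
qed

lemma closedin_remainder_countably_separated_from_closure:
  assumes "compact_space T" and "X \<subseteq> W"
    and "\<And>C. compactin T C \<Longrightarrow> C \<subseteq> W \<Longrightarrow> countably_separated T (C \<inter> X) (topspace T - X)"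
    and "closedin (subtopology T (topspace T - X)) F" and "F \<subseteq> W"
  shows "countably_separated T (T closure_of F - F) F"
proof -
  have "(topspace T - X) \<inter> T closure_of F = F"
    using closedin_Int_closure_of[THEN iffD1, OF assms(4)] .
  then have "T closure_of F \<subseteq> W" and diff: "T closure_of F - F \<subseteq> T closure_of F \<inter> X"
    and "F \<subseteq> topspace T - X"
    using assms(2,5) closure_of_subset_topspace[of T F] by blast+
  then have "countably_separated T (T closure_of F \<inter> X) (topspace T - X)"
    using assms(3) closedin_compact_space[OF assms(1) closedin_closure_of] by blast
  then show ?thesis
    using diff \<open>F \<subseteq> topspace T - X\<close> by (rule countably_separated_mono)
qed

theorem theorem5p1:
  fixes bX :: "'a topology" and X :: "'a set"
  assumes "compactification_of bX X"
    and "Tychonoff_space (subtopology bX X)"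
    and "regular_space (subtopology bX X)"
    and "locally_Menger_space (subtopology bX X)"
    and "p_space_in bX X"
  shows "\<exists>K. K \<subseteq> topspace bX - X \<and> compactin (subtopology bX (topspace bX - X)) K \<and>
           (\<forall>F. closedin (subtopology bX (topspace bX - X)) F \<and> F \<inter> K = {} \<longrightarrow>
                Lindelof_space (subtopology bX F) \<and> p_space_in bX F \<and> s_space_in bX F)"
proof -
  have cpt: "compact_space bX" and H: "Hausdorff_space bX" and "X \<subseteq> topspace bX"
    and "p_space_wrt bX X"
    using assms(1,5) unfolding compactification_of_def p_space_in_def by auto
  then obtain W where W: "openin bX W" "X \<subseteq> W"
    and sep: "\<And>C. compactin bX C \<Longrightarrow> C \<subseteq> W \<Longrightarrow> countably_separated bX (C \<inter> X) (topspace bX - X)"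
    using countably_separated_open_neighbourhood compact_Hausdorff_imp_regular_space assms(4) by metis
  have "topspace bX - W \<subseteq> topspace bX - X"
    using W(2) by blast
  moreover have "compactin (subtopology bX (topspace bX - X)) (topspace bX - W)"
    using calculation W(1) cpt by (simp add: compactin_subtopology closedin_compact_space closedin_diff)
  moreover have "Lindelof_space (subtopology bX F) \<and> p_space_in bX F \<and> s_space_in bX F"
    if F: "closedin (subtopology bX (topspace bX - X)) F" "F \<inter> (topspace bX - W) = {}" for F
  proof -
    have "F \<subseteq> topspace bX" and "F \<subseteq> W"
      using F closedin_subset by fastforce+
    then show ?thesis
      using countably_separated_from_closure_imp_Lindelof_p_s_space[OF cpt H]
        closedin_remainder_countably_separated_from_closure[OF cpt W(2) sep F(1)] by simp
  qed
  ultimately show ?thesis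
    by blast
qed

end
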